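(* Let $\mu_1,\mu_2$ be compactly supported positive Borel measures on $\mathbb{C}$, both with infinite support, and suppose both $\operatorname{supp}(\mu_1)$ and $\operatorname{supp}(\mu_2)$ are polynomially convex. If $0<\lambda(\mu_1,\mu_2)\le\beta(\mu_1,\mu_2)<\infty$, then $\operatorname{supp}(\mu_1)=\operatorname{supp}(\mu_2)$.
   Context: For positive Borel measures $\mu_1,\mu_2$ on $\mathbb{C}$ with finite moments and $\mu_2$ infinitely supported, $\lambda(\mu_1,\mu_2)=\inf\{\int|p|^2d\mu_1/\int|p|^2d\mu_2 : p\in\mathbb{P}[z]\setminus\{0\}\}$ and $\beta(\mu_1,\mu_2)=\sup\{\int|p|^2d\mu_1/\int|p|^2d\mu_2 : p\in\mathbb{P}[z]\setminus\{0\}\}$ (equivalently, limits of the smallest/largest generalized eigenvalues of the $(n+1)\times(n+1)$ truncations of the moment matrix $\mathbf{M}(\mu_1)=(\int z^i\bar z^jd\mu_1)$ with respect to those of $\mathbf{M}(\mu_2)$). A compact set $K\subset\mathbb{C}$ is polynomially convex if $K=\operatorname{Pc}(K)$, where $\operatorname{Pc}(K)=\{z: |p(z)|\le\max_K|p| \ \forall p\in\mathbb{P}[z]\}$. *)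

theory Defs
  imports "HOL-Analysis.Analysis" "HOL-Computational_Algebra.Polynomial"
begin

definition msupp :: "complex measure \<Rightarrow> complex set" where
  "msupp \<mu> = {z. \<forall>e>0. emeasure \<mu> (ball z e) > 0}"

definition Pc :: "complex set \<Rightarrow> complex set" where
  "Pc K = {z. \<forall>p :: complex poly. cmod (poly p z) \<le> (SUP w\<in>K. cmod (poly p w))}"

definition poly_convex :: "complex set \<Rightarrow> bool" where
  "poly_convex K \<longleftrightarrow> K = Pc K"

definition rayleigh :: "complex measure \<Rightarrow> complex measure \<Rightarrow> complex poly \<Rightarrow> real" where
  "rayleigh \<mu>1 \<mu>2 p =
     (\<integral>z. (cmod (poly p z))^2 \<partial>\<mu>1) / (\<integral>z. (cmod (poly p z))^2 \<partial>\<mu>2)"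

definition lambda_mm :: "complex measure \<Rightarrow> complex measure \<Rightarrow> ereal" where
  "lambda_mm \<mu>1 \<mu>2 = (INF p\<in>{p. p \<noteq> 0}. ereal (rayleigh \<mu>1 \<mu>2 p))"

definition beta_mm :: "complex measure \<Rightarrow> complex measure \<Rightarrow> ereal" where
  "beta_mm \<mu>1 \<mu>2 = (SUP p\<in>{p. p \<noteq> 0}. ereal (rayleigh \<mu>1 \<mu>2 p))"

end

theory Submission imports Defs begin

text \<open>
  If some \<open>z\<^sub>0\<close> lies in the support of one measure but not in the polynomially convex support
  \<open>K\<close> of the other, there is a polynomial \<open>q\<close> with \<open>|q| \<le> 1\<close> on \<open>K\<close> and \<open>|q| \<ge> d > 1\<close>
  on a disc around \<open>z\<^sub>0\<close>. The integral of \<open>|q^n|^2\<close> then grows like \<open>d^(2n)\<close> for the first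
  measure and stays bounded for the other, so the Rayleigh quotients of the powers \<open>q\<^sup>n\<close>
  tend to \<open>\<infinity>\<close> or to \<open>0\<close>. Either conclusion contradicts \<open>0 < \<lambda> \<le> \<beta> < \<infinity>\<close>.
\<close>

lemma AE_in_msupp:
  fixes \<mu> :: "complex measure"
  assumes "sets \<mu> = sets borel"
  shows "AE z in \<mu>. z \<in> msupp \<mu>"
proof -
  define U where "U = {ball z e | z e. e > 0 \<and> emeasure \<mu> (ball z e) = 0}"
  obtain F where F: "F \<subseteq> U" "countable F" "\<Union>F = \<Union>U"
    using Lindelof[of U] unfolding U_def by blast
  have "- msupp \<mu> \<subseteq> \<Union>U"
  proof
    fix z assume "z \<in> - msupp \<mu>"
    then obtain e where "e > 0" "emeasure \<mu> (ball z e) = 0"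
      unfolding msupp_def by (auto simp: zero_less_iff_neq_zero)
    then show "z \<in> \<Union>U" unfolding U_def by (intro UnionI[of "ball z e"]) auto
  qed
  moreover have "(\<Union>S\<in>F. id S) \<in> null_sets \<mu>"
  proof (rule null_sets_UN'[OF F(2)])
    fix S assume "S \<in> F"
    then show "id S \<in> null_sets \<mu>"
      using F(1) assms unfolding U_def by (auto simp: null_sets_def)
  qed
  ultimately show ?thesis
    by (intro AE_I'[where N = "\<Union>F"]) (use F(3) in auto)
qed

lemma integrable_continuous_compact_msupp:
  fixes \<mu> :: "complex measure" and f :: "complex \<Rightarrow> real"
  assumes "sets \<mu> = sets borel" "finite_measure \<mu>" "compact (msupp \<mu>)"
    and "continuous_on UNIV f"
  shows "integrable \<mu> f"
proof -
  have "compact (f ` msupp \<mu>)"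
    using compact_continuous_image[OF continuous_on_subset[OF assms(4)] assms(3)] by simp
  then obtain B where B: "\<forall>z\<in>msupp \<mu>. norm (f z) \<le> B"
    using compact_imp_bounded bounded_iff by (metis image_eqI)
  have "f \<in> borel_measurable \<mu>"
    by (subst measurable_cong_sets[OF assms(1) refl]) (rule borel_measurable_continuous_onI[OF assms(4)])
  moreover have "AE z in \<mu>. norm (f z) \<le> B"
    using AE_in_msupp[OF assms(1)] by eventually_elim (use B in auto)
  ultimately show ?thesis
    by (intro finite_measure.integrable_const_bound[OF assms(2)])
qed

lemma integral_le_measure_space_if_le_one_on_msupp:
  fixes \<mu> :: "complex measure" and f :: "complex \<Rightarrow> real"
  assumes "sets \<mu> = sets borel" "finite_measure \<mu>" "compact (msupp \<mu>)"
    and "continuous_on UNIV f" and "\<forall>z\<in>msupp \<mu>. f z \<le> 1"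
  shows "(\<integral>z. f z \<partial>\<mu>) \<le> measure \<mu> (space \<mu>)"
proof -
  have "(\<integral>z. f z \<partial>\<mu>) \<le> (\<integral>z. 1 \<partial>\<mu>)"
  proof (rule integral_mono_AE)
    show "AE z in \<mu>. f z \<le> 1"
      using AE_in_msupp[OF assms(1)] by eventually_elim (use assms(5) in auto)
  qed (use integrable_continuous_compact_msupp[OF assms(1-4)]
          finite_measure.integrable_const[OF assms(2)] in auto)
  then show ?thesis by simp
qed

lemma measure_ball_msupp_pos:
  fixes \<mu> :: "complex measure"
  assumes "sets \<mu> = sets borel" "finite_measure \<mu>" "z\<^sub>0 \<in> msupp \<mu>" "e > 0"
  shows "0 < measure \<mu> (ball z\<^sub>0 e)"
  using assms unfolding msupp_def
  by (auto simp: finite_measure.emeasure_eq_measure[OF assms(2)])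

lemma measure_ball_mult_le_integral:
  fixes \<mu> :: "complex measure" and f :: "complex \<Rightarrow> real"
  assumes "sets \<mu> = sets borel" "finite_measure \<mu>" "integrable \<mu> f"
    and "\<And>z. 0 \<le> f z" and "\<forall>z\<in>ball z\<^sub>0 e. c \<le> f z"
  shows "measure \<mu> (ball z\<^sub>0 e) * c \<le> (\<integral>z. f z \<partial>\<mu>)"
proof -
  have ball: "ball z\<^sub>0 e \<in> sets \<mu>" "emeasure \<mu> (ball z\<^sub>0 e) < \<infinity>"
    using assms(1) finite_measure.emeasure_finite[OF assms(2)] by (auto simp: less_top)
  have "(\<integral>z. c * indicator (ball z\<^sub>0 e) z \<partial>\<mu>) \<le> (\<integral>z. f z \<partial>\<mu>)"
  proof (rule integral_mono)
    show "integrable \<mu> (\<lambda>z. c * indicator (ball z\<^sub>0 e) z)"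
      using ball by (intro integrable_mult_right integrable_real_indicator)
  qed (use assms(3-5) in \<open>auto simp: indicator_def\<close>)
  then show ?thesis using ball by (simp add: mult.commute)
qed

lemma norm_poly_power_sq: "(cmod (poly (q ^ n) z))\<^sup>2 = ((cmod (poly q z))\<^sup>2) ^ n"
  by (simp add: poly_power norm_power power_mult[symmetric] mult.commute)

lemma continuous_norm_poly_sq: "continuous_on UNIV (\<lambda>z. (cmod (poly q z))\<^sup>2)"
  by (intro continuous_intros)

lemma ball_where_norm_poly_gt:
  assumes "d < cmod (poly q w)"
  obtains e where "e > 0" "\<forall>z\<in>ball w e. d < cmod (poly q z)"
proof -
  have "open {z. d < cmod (poly q z)}"
    by (intro open_Collect_less continuous_intros)
  then obtain e where "e > 0" "ball w e \<subseteq> {z. d < cmod (poly q z)}"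
    using assms by (auto simp: open_contains_ball)
  then show ?thesis using that by blast
qed

lemma integral_norm_poly_sq_pos:
  fixes \<mu> :: "complex measure"
  assumes "sets \<mu> = sets borel" "finite_measure \<mu>" "compact (msupp \<mu>)"
    and "infinite (msupp \<mu>)" and "q \<noteq> 0"
  shows "0 < (\<integral>z. (cmod (poly q z))\<^sup>2 \<partial>\<mu>)"
proof -
  obtain w where w: "w \<in> msupp \<mu>" "poly q w \<noteq> 0"
    using assms(4) poly_roots_finite[OF assms(5)]
    by (metis (mono_tags, lifting) finite_subset mem_Collect_eq subsetI)
  obtain e where e: "e > 0" "\<forall>z\<in>ball w e. cmod (poly q w) / 2 < cmod (poly q z)"
    using ball_where_norm_poly_gt[of "cmod (poly q w) / 2" q w] w(2) by auto
  have "0 < measure \<mu> (ball w e) * (cmod (poly q w) / 2)\<^sup>2"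
    using measure_ball_msupp_pos[OF assms(1,2) w(1) e(1)] w(2) by simp
  also have "\<dots> \<le> (\<integral>z. (cmod (poly q z))\<^sup>2 \<partial>\<mu>)"
    using e(2) by (intro measure_ball_mult_le_integral assms(1,2)
        integrable_continuous_compact_msupp[OF assms(1-3) continuous_norm_poly_sq])
      (auto intro!: power_mono)
  finally show ?thesis .
qed

lemma poly_convex_separation:
  assumes "compact K" "K \<noteq> {}" "poly_convex K" "z\<^sub>0 \<notin> K"
  obtains q d e where "q \<noteq> 0" "1 < d" "0 < e" "\<forall>z\<in>K. cmod (poly q z) \<le> 1"
    "\<forall>z\<in>ball z\<^sub>0 e. d < cmod (poly q z)"
proof -
  from assms(3,4) have "z\<^sub>0 \<notin> Pc K" unfolding poly_convex_def by simp
  then obtain p where p: "(SUP w\<in>K. cmod (poly p w)) < cmod (poly p z\<^sub>0)"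
    unfolding Pc_def by (auto simp: not_le)
  define S where "S = (SUP w\<in>K. cmod (poly p w))"
  define a where "a = cmod (poly p z\<^sub>0)"
  have bdd: "bdd_above ((\<lambda>w. cmod (poly p w)) ` K)"
    by (intro bounded_imp_bdd_above compact_imp_bounded compact_continuous_image assms(1)
        continuous_intros)
  have le_S: "cmod (poly p w) \<le> S" if "w \<in> K" for w
    unfolding S_def using that bdd by (rule cSUP_upper)
  have "0 \<le> S" using assms(2) le_S norm_ge_zero order_trans by blast
  moreover have "S < a" using p unfolding a_def S_def .
  \<comment> \<open>Rescaling \<open>p\<close> by \<open>2 / (a + S)\<close> puts the threshold \<open>1\<close> halfway between \<open>S\<close> and \<open>a\<close>.\<close>
  define q where "q = smult (complex_of_real (2 / (a + S))) p"
  have norm_q: "\<And>z. cmod (poly q z) = 2 / (a + S) * cmod (poly p z)"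
    unfolding q_def poly_smult norm_mult norm_of_real using \<open>0 \<le> S\<close> \<open>S < a\<close> by simp
  have "\<forall>z\<in>K. cmod (poly q z) \<le> 1"
  proof
    fix z assume "z \<in> K"
    then have "cmod (poly p z) \<le> S" by (rule le_S)
    then show "cmod (poly q z) \<le> 1" using \<open>0 \<le> S\<close> \<open>S < a\<close> by (simp add: norm_q field_simps)
  qed
  moreover have gt: "1 < cmod (poly q z\<^sub>0)"
    using \<open>0 \<le> S\<close> \<open>S < a\<close> by (simp add: norm_q a_def[symmetric] field_simps)
  moreover obtain e where "e > 0"
    "\<forall>z\<in>ball z\<^sub>0 e. (1 + cmod (poly q z\<^sub>0)) / 2 < cmod (poly q z)"
    using ball_where_norm_poly_gt[of "(1 + cmod (poly q z\<^sub>0)) / 2" q z\<^sub>0] gt by auto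
  moreover have "q \<noteq> 0" using gt by auto
  ultimately show ?thesis
    using that[of q "(1 + cmod (poly q z\<^sub>0)) / 2"] by auto
qed

lemma rayleigh_numerator_unbounded_off_support:
  fixes \<mu>\<^sub>1 \<mu>\<^sub>2 :: "complex measure"
  assumes "sets \<mu>\<^sub>1 = sets borel" "finite_measure \<mu>\<^sub>1" "compact (msupp \<mu>\<^sub>1)"
    and "sets \<mu>\<^sub>2 = sets borel" "finite_measure \<mu>\<^sub>2" "compact (msupp \<mu>\<^sub>2)"
    and "msupp \<mu>\<^sub>2 \<noteq> {}" "poly_convex (msupp \<mu>\<^sub>2)"
    and "z\<^sub>0 \<in> msupp \<mu>\<^sub>1" "z\<^sub>0 \<notin> msupp \<mu>\<^sub>2"
  obtains p where "p \<noteq> 0"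
    "C * (\<integral>z. (cmod (poly p z))\<^sup>2 \<partial>\<mu>\<^sub>2) < (\<integral>z. (cmod (poly p z))\<^sup>2 \<partial>\<mu>\<^sub>1)"
proof -
  obtain q d e where q: "q \<noteq> 0" "1 < d" "0 < e" "\<forall>z\<in>msupp \<mu>\<^sub>2. cmod (poly q z) \<le> 1"
    "\<forall>z\<in>ball z\<^sub>0 e. d < cmod (poly q z)"
    using poly_convex_separation[OF assms(6,7,8,10)] .
  define m where "m = measure \<mu>\<^sub>1 (ball z\<^sub>0 e)"
  define M where "M = measure \<mu>\<^sub>2 (space \<mu>\<^sub>2)"
  have "m > 0" unfolding m_def using measure_ball_msupp_pos[OF assms(1,2,9) q(3)] .
  have "1 < d\<^sup>2" using q(2) by (simp add: one_less_power)
  then obtain n where n: "\<bar>C\<bar> * M / m < (d\<^sup>2) ^ n" using real_arch_pow by blast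
  have "C * (\<integral>z. (cmod (poly (q ^ n) z))\<^sup>2 \<partial>\<mu>\<^sub>2) \<le> \<bar>C\<bar> * M"
  proof -
    have "(\<integral>z. (cmod (poly (q ^ n) z))\<^sup>2 \<partial>\<mu>\<^sub>2) \<le> M"
      unfolding M_def using q(4)
      by (intro integral_le_measure_space_if_le_one_on_msupp assms(4-6) continuous_norm_poly_sq)
        (auto simp: norm_poly_power_sq power_le_one simp del: poly_power)
    moreover have "0 \<le> (\<integral>z. (cmod (poly (q ^ n) z))\<^sup>2 \<partial>\<mu>\<^sub>2)" by simp
    ultimately show ?thesis
      using abs_ge_self[of C] by (meson abs_ge_zero mult_left_mono mult_right_mono order_trans)
  qed
  also have "\<dots> < m * (d\<^sup>2) ^ n" using n \<open>m > 0\<close> by (simp add: field_simps)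
  also have "\<dots> \<le> (\<integral>z. (cmod (poly (q ^ n) z))\<^sup>2 \<partial>\<mu>\<^sub>1)"
    unfolding m_def norm_poly_power_sq using q(2,5)
    by (intro measure_ball_mult_le_integral assms(1,2) ballI power_mono
        integrable_continuous_compact_msupp[OF assms(1-3)] continuous_intros)
      (auto intro!: less_imp_le)
  finally show ?thesis using that[of "q ^ n"] q(1) by (simp add: norm_poly_power_sq)
qed

lemma beta_mm_eq_infinity_if_not_subset:
  fixes \<mu>\<^sub>1 \<mu>\<^sub>2 :: "complex measure"
  assumes "sets \<mu>\<^sub>1 = sets borel" "finite_measure \<mu>\<^sub>1" "compact (msupp \<mu>\<^sub>1)"
    and "sets \<mu>\<^sub>2 = sets borel" "finite_measure \<mu>\<^sub>2" "compact (msupp \<mu>\<^sub>2)"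
    and "infinite (msupp \<mu>\<^sub>2)" "poly_convex (msupp \<mu>\<^sub>2)"
    and "\<not> msupp \<mu>\<^sub>1 \<subseteq> msupp \<mu>\<^sub>2"
  shows "beta_mm \<mu>\<^sub>1 \<mu>\<^sub>2 = \<infinity>"
proof (rule ereal_top)
  fix C
  obtain z\<^sub>0 where z\<^sub>0: "z\<^sub>0 \<in> msupp \<mu>\<^sub>1" "z\<^sub>0 \<notin> msupp \<mu>\<^sub>2" using assms(9) by blast
  have nonempty: "msupp \<mu>\<^sub>2 \<noteq> {}" using assms(7) by auto
  obtain p where p: "p \<noteq> 0"
    "C * (\<integral>z. (cmod (poly p z))\<^sup>2 \<partial>\<mu>\<^sub>2) < (\<integral>z. (cmod (poly p z))\<^sup>2 \<partial>\<mu>\<^sub>1)"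
    by (rule rayleigh_numerator_unbounded_off_support[OF assms(1-6) nonempty assms(8) z\<^sub>0])
  have "0 < (\<integral>z. (cmod (poly p z))\<^sup>2 \<partial>\<mu>\<^sub>2)"
    by (rule integral_norm_poly_sq_pos[OF assms(4-7) p(1)])
  with p(2) have "C < rayleigh \<mu>\<^sub>1 \<mu>\<^sub>2 p"
    unfolding rayleigh_def by (simp add: field_simps)
  moreover have "ereal (rayleigh \<mu>\<^sub>1 \<mu>\<^sub>2 p) \<le> beta_mm \<mu>\<^sub>1 \<mu>\<^sub>2"
    unfolding beta_mm_def using p(1) by (intro SUP_upper) auto
  ultimately show "ereal C \<le> beta_mm \<mu>\<^sub>1 \<mu>\<^sub>2"
    by (meson ereal_less_eq(3) less_imp_le order_trans)
qed

lemma lambda_mm_le_zero_if_not_superset: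
  fixes \<mu>\<^sub>1 \<mu>\<^sub>2 :: "complex measure"
  assumes "sets \<mu>\<^sub>1 = sets borel" "finite_measure \<mu>\<^sub>1" "compact (msupp \<mu>\<^sub>1)"
    and "msupp \<mu>\<^sub>1 \<noteq> {}" "poly_convex (msupp \<mu>\<^sub>1)"
    and "sets \<mu>\<^sub>2 = sets borel" "finite_measure \<mu>\<^sub>2" "compact (msupp \<mu>\<^sub>2)"
    and "\<not> msupp \<mu>\<^sub>2 \<subseteq> msupp \<mu>\<^sub>1"
  shows "lambda_mm \<mu>\<^sub>1 \<mu>\<^sub>2 \<le> 0"
proof (rule ereal_le_epsilon2)
  fix \<epsilon> :: real assume "0 < \<epsilon>"
  obtain z\<^sub>0 where "z\<^sub>0 \<in> msupp \<mu>\<^sub>2" "z\<^sub>0 \<notin> msupp \<mu>\<^sub>1" using assms(9) by blast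
  then obtain p where p: "p \<noteq> 0"
    "1 / \<epsilon> * (\<integral>z. (cmod (poly p z))\<^sup>2 \<partial>\<mu>\<^sub>1) < (\<integral>z. (cmod (poly p z))\<^sup>2 \<partial>\<mu>\<^sub>2)"
    by (rule rayleigh_numerator_unbounded_off_support[OF assms(6-8,1-5)])
  have "0 \<le> 1 / \<epsilon> * (\<integral>z. (cmod (poly p z))\<^sup>2 \<partial>\<mu>\<^sub>1)" using \<open>0 < \<epsilon>\<close> by simp
  with p(2) have "0 < (\<integral>z. (cmod (poly p z))\<^sup>2 \<partial>\<mu>\<^sub>2)" by linarith
  with p(2) \<open>0 < \<epsilon>\<close> have "rayleigh \<mu>\<^sub>1 \<mu>\<^sub>2 p < \<epsilon>"
    unfolding rayleigh_def by (simp add: field_simps)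
  moreover have "lambda_mm \<mu>\<^sub>1 \<mu>\<^sub>2 \<le> ereal (rayleigh \<mu>\<^sub>1 \<mu>\<^sub>2 p)"
    unfolding lambda_mm_def using p(1) by (intro INF_lower) auto
  ultimately have "lambda_mm \<mu>\<^sub>1 \<mu>\<^sub>2 \<le> ereal \<epsilon>"
    by (meson ereal_less_eq(3) less_imp_le order_trans)
  then show "lambda_mm \<mu>\<^sub>1 \<mu>\<^sub>2 \<le> 0 + ereal \<epsilon>" by simp
qed

theorem corollary2:
  fixes \<mu>1 \<mu>2 :: "complex measure"
  assumes "sets \<mu>1 = sets borel" and "sets \<mu>2 = sets borel"
    and "finite_measure \<mu>1" and "finite_measure \<mu>2"
    and "compact (msupp \<mu>1)" and "compact (msupp \<mu>2)"
    and "infinite (msupp \<mu>1)" and "infinite (msupp \<mu>2)"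
    and "poly_convex (msupp \<mu>1)" and "poly_convex (msupp \<mu>2)"
    and "0 < lambda_mm \<mu>1 \<mu>2" and "lambda_mm \<mu>1 \<mu>2 \<le> beta_mm \<mu>1 \<mu>2"
    and "beta_mm \<mu>1 \<mu>2 < \<infinity>"
  shows "msupp \<mu>1 = msupp \<mu>2"
proof
  show "msupp \<mu>1 \<subseteq> msupp \<mu>2"
    using beta_mm_eq_infinity_if_not_subset[OF assms(1,3,5,2,4,6,8,10)] assms(13) by auto
  have "msupp \<mu>1 \<noteq> {}" using assms(7) by auto
  then show "msupp \<mu>2 \<subseteq> msupp \<mu>1"
    using lambda_mm_le_zero_if_not_superset[OF assms(1,3,5) _ assms(9,2,4,6)] assms(11) by force
qed

end
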